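(* Let $n \ge 1$ and $t$ be integers with $1 \le t < \frac{n+1}{2}$. Then the colorless cross-blockchain transaction task $(\mathcal{I}, \mathcal{O}', \Xi)$ on $n+1$ blockchains, defined in the context, has no $t$-resilient protocol in the asynchronous message-passing model with crash failures.
   Context: Setting. There are $n+1$ distinct blockchains $C_0,\dots,C_n$. An $(n+1)$-party cross-blockchain transaction touches exactly one block $v_i$ on each blockchain $C_i$. Input complex $\mathcal{I}$. The vertices are the pairs $(v_i, a)$ with $0 \le i \le n$ and $a \in \{0,1,\bot\}$. Here $0$ means not committed, $1$ means committed, and $\bot$ means the block's branch was suspended by a fork. A nonempty set of vertices is a simplex if and only if its vertices involve pairwise distinct blocks. Colorless output complex $\mathcal{O}'$. Its vertices are the values $0$ (aborted) and $1$ (committed), and its only simplices are $\{0\}$ and $\{1\}$. Colorless carrier map $\Xi$. For a simplex $\sigma$ of $\mathcal{I}$: - $\Xi(\sigma)=\{1\}$ if all input values in $\sigma$ are $1$; - $\Xi(\sigma)=\{0\}$ if some input value in $\sigma$ is $\bot$; - $\Xi(\sigma)=\mathcal{O}'$ otherwise. Computational model. There are $n+1$ processes (one per blockchain) communicating by asynchronous message passing, and at most $t$ of them may fail by crashing. Process $i$ starts with an input vertex $(v_i, a_i)$ of $\mathcal{I}$. A protocol solves the colorless task if, for every execution with at most $t$ crashes, every non-crashed process eventually decides a value in $\{0,1\}$. Moreover, if $\sigma$ is the simplex of inputs of the participating processes, the set of decided values must be a simplex of $\Xi(\sigma)$; in particular all decided values must be equal. Such a protocol is called $t$-resilient. *)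

theory Defs
  imports Main
begin

text \<open>Input values: 0 (not committed), 1 (committed), Bot (branch suspended by a fork).\<close>
datatype inval = Zero | One | Bot

text \<open>Blocks: process / blockchain i touches block v i (v injective on {0..n}).
  Vertices of the input complex are pairs (block, value).\<close>
definition in_vertices :: "nat \<Rightarrow> (nat \<Rightarrow> 'b) \<Rightarrow> ('b \<times> inval) set" where
  "in_vertices n v = {(v i, a) | i a. i \<le> n}"

definition input_complex :: "nat \<Rightarrow> (nat \<Rightarrow> 'b) \<Rightarrow> ('b \<times> inval) set set" where
  "input_complex n v = {\<sigma>. \<sigma> \<noteq> {} \<and> \<sigma> \<subseteq> in_vertices n v \<and>
       (\<forall>x\<in>\<sigma>. \<forall>y\<in>\<sigma>. fst x = fst y \<longrightarrow> x = y)}"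

text \<open>Colorless output complex O': vertices 0 (aborted), 1 (committed); simplices {0},{1}.\<close>
definition out_complex :: "nat set set" where
  "out_complex = {{0}, {1}}"

definition Xi :: "('b \<times> inval) set \<Rightarrow> nat set set" where
  "Xi \<sigma> = (if (\<forall>x\<in>\<sigma>. snd x = One) then {{1}}
            else if (\<exists>x\<in>\<sigma>. snd x = Bot) then {{0}}
            else out_complex)"

text \<open>In a step, process i either receives one message (sender, payload)
  or the null message (None); it moves to a new local state and sends a finite list of
  messages (destination, payload). out i s = Some d means that the process has
  decided d in local state s; the decision of a process is the FIRST output it produces
  (decisions are irrevocable).\<close>
record ('b, 's, 'm) protocol =
  init   :: "nat \<Rightarrow> 'b \<times> inval \<Rightarrow> 's"
  trans  :: "nat \<Rightarrow> 's \<Rightarrow> (nat \<times> 'm) option \<Rightarrow> 's \<times> (nat \<times> 'm) list"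
  out :: "nat \<Rightarrow> 's \<Rightarrow> nat option"

text \<open>Messages in transit are uniquely tagged: (send step k, index j, sender, receiver, payload).\<close>
type_synonym 'm msg = "nat \<times> nat \<times> nat \<times> nat \<times> 'm"

definition msg_src :: "'m msg \<Rightarrow> nat" where "msg_src e = fst (snd (snd e))"
definition msg_dst :: "'m msg \<Rightarrow> nat" where "msg_dst e = fst (snd (snd (snd e)))"
definition msg_payload :: "'m msg \<Rightarrow> 'm" where "msg_payload e = snd (snd (snd (snd e)))"

type_synonym ('s, 'm) config = "(nat \<Rightarrow> 's) \<times> 'm msg set"

text \<open>An event: the stepping process and the message it receives (if any).\<close>
type_synonym 'm event = "nat \<times> 'm msg option"

definition step_config ::
  "('b, 's, 'm) protocol \<Rightarrow> nat \<Rightarrow> 'm event \<Rightarrow> ('s, 'm) config \<Rightarrow> ('s, 'm) config" where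
  "step_config P k ev c =
     (let p = fst ev; mo = snd ev;
          r = trans P p (fst c p) (map_option (\<lambda>e. (msg_src e, msg_payload e)) mo);
          outs = snd r
      in ((fst c)(p := fst r),
          (snd c - set_option mo) \<union>
            {(k, j, p, fst (outs ! j), snd (outs ! j)) | j. j < length outs}))"

definition is_run ::
  "('b, 's, 'm) protocol \<Rightarrow> nat \<Rightarrow> (nat \<Rightarrow> 'b) \<Rightarrow> (nat \<Rightarrow> inval)
     \<Rightarrow> (nat \<Rightarrow> 'm event) \<Rightarrow> (nat \<Rightarrow> ('s, 'm) config) \<Rightarrow> bool" where
  "is_run P n v a evs C \<longleftrightarrow>
     C 0 = (\<lambda>i. init P i (v i, a i), {}) \<and>
     (\<forall>k. fst (evs k) \<le> n \<and>
          (\<forall>e. snd (evs k) = Some e \<longrightarrow> e \<in> snd (C k) \<and> msg_dst e = fst (evs k)) \<and>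
          C (Suc k) = step_config P k (evs k) (C k))"

text \<open>Faulty (crashed) processes: those taking only finitely many steps.\<close>
definition faulty :: "nat \<Rightarrow> (nat \<Rightarrow> 'm event) \<Rightarrow> nat set" where
  "faulty n evs = {p. p \<le> n \<and> finite {k. fst (evs k) = p}}"

definition participating :: "nat \<Rightarrow> (nat \<Rightarrow> 'm event) \<Rightarrow> nat set" where
  "participating n evs = {p. p \<le> n \<and> (\<exists>k. fst (evs k) = p)}"

definition fair :: "nat \<Rightarrow> (nat \<Rightarrow> 'm event) \<Rightarrow> (nat \<Rightarrow> ('s, 'm) config) \<Rightarrow> bool" where
  "fair n evs C \<longleftrightarrow>
     (\<forall>k e. e \<in> snd (C k) \<and> msg_dst e \<le> n \<and> msg_dst e \<notin> faulty n evs
        \<longrightarrow> (\<exists>k'\<ge>k. snd (evs k') = Some e))"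

definition decides ::
  "('b, 's, 'm) protocol \<Rightarrow> (nat \<Rightarrow> ('s, 'm) config) \<Rightarrow> nat \<Rightarrow> nat \<Rightarrow> bool" where
  "decides P C p d \<longleftrightarrow>
     (\<exists>k. out P p (fst (C k) p) = Some d \<and> (\<forall>k'<k. out P p (fst (C k') p) = None))"

definition decided_values ::
  "('b, 's, 'm) protocol \<Rightarrow> nat \<Rightarrow> (nat \<Rightarrow> 'm event) \<Rightarrow> (nat \<Rightarrow> ('s, 'm) config) \<Rightarrow> nat set" where
  "decided_values P n evs C = {d. \<exists>p \<in> participating n evs. decides P C p d}"

definition input_simplex :: "nat \<Rightarrow> (nat \<Rightarrow> 'b) \<Rightarrow> (nat \<Rightarrow> inval) \<Rightarrow> (nat \<Rightarrow> 'm event) \<Rightarrow> ('b \<times> inval) set" where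
  "input_simplex n v a evs = {(v p, a p) | p. p \<in> participating n evs}"

definition t_resilient_solves ::
  "nat \<Rightarrow> nat \<Rightarrow> (nat \<Rightarrow> 'b) \<Rightarrow> ('b, 's, 'm) protocol \<Rightarrow> bool" where
  "t_resilient_solves n t v P \<longleftrightarrow>
     (\<forall>a evs C. is_run P n v a evs C \<and> fair n evs C \<and> card (faulty n evs) \<le> t \<longrightarrow>
        (\<forall>p. p \<le> n \<and> p \<notin> faulty n evs \<longrightarrow> (\<exists>d\<in>{0,1}. decides P C p d)) \<and>
        decided_values P n evs C \<in> Xi (input_simplex n v a evs))"

end

theory Submission
  imports Defs "HOL-Library.Infinite_Set"
begin

text \<open>A single crash already defeats every protocol. In the run where all inputs are 1 and
  process n never takes a step, resilience forces process 0 to decide, and validity forces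
  the decision 1, at some step K. Now give process n the input \<open>Bot\<close>, keep it asleep
  until step K and schedule everybody afterwards: up to step K process 0 cannot tell the
  two runs apart, so it again decides 1, whereas the carrier map demands 0 because a
  suspended block participates. Both runs are produced by a scheduler that always
  delivers the oldest pending message, which makes them automatically fair.\<close>

definition oldest_msg_to :: "nat \<Rightarrow> 'm msg set \<Rightarrow> 'm msg option" where
  "oldest_msg_to p M = (if \<exists>e\<in>M. msg_dst e = p
     then Some (ARG_MIN fst e. e \<in> M \<and> msg_dst e = p) else None)"

lemma oldest_msg_to_SomeD:
  assumes "oldest_msg_to p M = Some e"
  shows "e \<in> M \<and> msg_dst e = p"
proof -
  from assms obtain e0 where e0: "e0 \<in> M \<and> msg_dst e0 = p"
    and e: "e = (ARG_MIN fst e. e \<in> M \<and> msg_dst e = p)"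
    unfolding oldest_msg_to_def by (auto split: if_splits)
  show ?thesis
    unfolding e using e0 by (rule arg_min_nat_lemma[THEN conjunct1])
qed

lemma oldest_msg_to_le:
  assumes "e \<in> M" "msg_dst e = p"
  shows "\<exists>e'. oldest_msg_to p M = Some e' \<and> fst e' \<le> fst e"
proof -
  have "fst (ARG_MIN fst e. e \<in> M \<and> msg_dst e = p) \<le> fst e"
    using assms by (intro arg_min_nat_le) simp
  moreover have "oldest_msg_to p M = Some (ARG_MIN fst e. e \<in> M \<and> msg_dst e = p)"
    using assms unfolding oldest_msg_to_def by auto
  ultimately show ?thesis
    by blast
qed

lemma step_config_msgD:
  "e \<in> snd (step_config P k ev c) \<Longrightarrow> (e \<in> snd c \<and> snd ev \<noteq> Some e) \<or> fst e = k"
  unfolding step_config_def Let_def by auto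

lemma step_config_msgI:
  "e \<in> snd c \<Longrightarrow> snd ev \<noteq> Some e \<Longrightarrow> e \<in> snd (step_config P k ev c)"
  unfolding step_config_def Let_def by auto

lemma finite_step_config_msgs:
  "finite (snd c) \<Longrightarrow> finite (snd (step_config P k ev c))"
  unfolding step_config_def Let_def by auto

definition agree_except :: "nat \<Rightarrow> ('s, 'm) config \<Rightarrow> ('s, 'm) config \<Rightarrow> bool" where
  "agree_except q c1 c2 \<longleftrightarrow> snd c1 = snd c2 \<and> (\<forall>i. i \<noteq> q \<longrightarrow> fst c1 i = fst c2 i)"

lemma step_config_agree_except:
  assumes "agree_except q c1 c2" "fst ev \<noteq> q"
  shows "agree_except q (step_config P k ev c1) (step_config P k ev c2)"
proof -
  have "fst c1 (fst ev) = fst c2 (fst ev)"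
    using assms unfolding agree_except_def by blast
  then show ?thesis
    using assms(1) unfolding agree_except_def step_config_def Let_def by simp
qed

primrec sched_config ::
  "('b, 's, 'm) protocol \<Rightarrow> (nat \<Rightarrow> 'b) \<Rightarrow> (nat \<Rightarrow> inval) \<Rightarrow> (nat \<Rightarrow> nat) \<Rightarrow> nat
     \<Rightarrow> ('s, 'm) config" where
  "sched_config P v a sch 0 = (\<lambda>i. init P i (v i, a i), {})"
| "sched_config P v a sch (Suc k) =
     step_config P k (sch k, oldest_msg_to (sch k) (snd (sched_config P v a sch k)))
       (sched_config P v a sch k)"

declare sched_config.simps(2) [simp del]

definition sched_event ::
  "('b, 's, 'm) protocol \<Rightarrow> (nat \<Rightarrow> 'b) \<Rightarrow> (nat \<Rightarrow> inval) \<Rightarrow> (nat \<Rightarrow> nat) \<Rightarrow> nat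
     \<Rightarrow> 'm event" where
  "sched_event P v a sch k = (sch k, oldest_msg_to (sch k) (snd (sched_config P v a sch k)))"

context
  fixes P :: "('b, 's, 'm) protocol" and v :: "nat \<Rightarrow> 'b" and a :: "nat \<Rightarrow> inval"
    and sch :: "nat \<Rightarrow> nat"
begin

lemma sched_config_Suc:
  "sched_config P v a sch (Suc k) = step_config P k (sched_event P v a sch k) (sched_config P v a sch k)"
  by (simp add: sched_event_def sched_config.simps)

lemma fst_sched_event [simp]: "fst (sched_event P v a sch k) = sch k"
  by (simp add: sched_event_def)

lemma sched_event_delivers:
  "snd (sched_event P v a sch k) = Some e \<Longrightarrow> e \<in> snd (sched_config P v a sch k) \<and> msg_dst e = sch k"
  unfolding sched_event_def using oldest_msg_to_SomeD by fastforce

lemma finite_sched_config_msgs: "finite (snd (sched_config P v a sch k))"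
  by (induction k) (auto intro: finite_step_config_msgs simp: sched_config_Suc)

lemma sched_config_msg_tag_less: "e \<in> snd (sched_config P v a sch k) \<Longrightarrow> fst e < k"
  by (induction k) (auto dest: step_config_msgD simp: sched_config_Suc)

lemma sched_config_msg_sent:
  "e \<in> snd (sched_config P v a sch k) \<Longrightarrow> e \<in> snd (sched_config P v a sch (Suc (fst e)))"
  by (induction k) (auto dest: step_config_msgD simp: sched_config_Suc)

lemma finite_sched_config_msgs_tag_le:
  "finite {e. \<exists>k. e \<in> snd (sched_config P v a sch k) \<and> fst e \<le> N}"
proof (rule finite_subset)
  show "{e. \<exists>k. e \<in> snd (sched_config P v a sch k) \<and> fst e \<le> N}
          \<subseteq> (\<Union>i\<le>N. snd (sched_config P v a sch (Suc i)))"
    using sched_config_msg_sent by blast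
qed (simp add: finite_sched_config_msgs)

lemma sched_config_msg_pending:
  assumes "e \<in> snd (sched_config P v a sch k)" "\<forall>k'\<ge>k. snd (sched_event P v a sch k') \<noteq> Some e"
  shows "e \<in> snd (sched_config P v a sch (k + m))"
  by (induction m) (use assms in \<open>auto intro: step_config_msgI simp: sched_config_Suc\<close>)

lemma sched_delivered_msg_gone:
  assumes "snd (sched_event P v a sch k) = Some e" "k < k'"
  shows "e \<notin> snd (sched_config P v a sch k')"
  using assms(2)
proof (induction k')
  case (Suc k')
  have "fst e < k"
    using assms(1) sched_event_delivers sched_config_msg_tag_less by blast
  then show ?case
    using Suc assms(1) by (auto dest: step_config_msgD simp: sched_config_Suc less_Suc_eq)
qed simp

lemma sched_event_delivers_once:
  assumes "snd (sched_event P v a sch k1) = Some e" "snd (sched_event P v a sch k2) = Some e"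
  shows "k1 = k2"
  using assms sched_event_delivers sched_delivered_msg_gone
  by (metis linorder_neqE_nat)

lemma sched_receives_no_newer:
  assumes "e \<in> snd (sched_config P v a sch k)" "\<forall>k'\<ge>k. snd (sched_event P v a sch k') \<noteq> Some e"
    and "k \<le> k'" "sch k' = msg_dst e"
  shows "\<exists>e'. snd (sched_event P v a sch k') = Some e'
           \<and> e' \<in> snd (sched_config P v a sch k') \<and> fst e' \<le> fst e"
proof -
  have "e \<in> snd (sched_config P v a sch k')"
    using sched_config_msg_pending[OF assms(1,2), of "k' - k"] assms(3) by simp
  then obtain e' where oldest: "oldest_msg_to (sch k') (snd (sched_config P v a sch k')) = Some e'"
    and "fst e' \<le> fst e"
    using oldest_msg_to_le assms(4) by metis
  then show ?thesis
    using oldest_msg_to_SomeD by (fastforce simp: sched_event_def)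
qed

text \<open>Each time the destination of a pending message e steps, it receives a message no newer
  than e; there are only finitely many of those, and each is received only once.\<close>

lemma sched_fair: "fair n (sched_event P v a sch) (sched_config P v a sch)"
  unfolding fair_def
proof (intro allI impI)
  fix k e
  assume "e \<in> snd (sched_config P v a sch k) \<and> msg_dst e \<le> n \<and> msg_dst e \<notin> faulty n (sched_event P v a sch)"
  then have pending: "e \<in> snd (sched_config P v a sch k)"
    and inf: "infinite {k. sch k = msg_dst e}"
    unfolding faulty_def by auto
  show "\<exists>k'\<ge>k. snd (sched_event P v a sch k') = Some e"
  proof (rule ccontr)
    assume "\<not> (\<exists>k'\<ge>k. snd (sched_event P v a sch k') = Some e)"
    then have undelivered: "\<forall>k'\<ge>k. snd (sched_event P v a sch k') \<noteq> Some e"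
      by blast
    define D where "D = {k'. k \<le> k' \<and> sch k' = msg_dst e}"
    define M where "M = {e'. \<exists>j. e' \<in> snd (sched_config P v a sch j) \<and> fst e' \<le> fst e}"
    let ?recv = "\<lambda>k'. snd (sched_event P v a sch k')"
    have "{k. sch k = msg_dst e} \<subseteq> D \<union> {..<k}"
      unfolding D_def by auto
    then have "infinite D"
      using inf finite_subset by blast
    have recv_D: "?recv ` D \<subseteq> Some ` M"
      using sched_receives_no_newer[OF pending undelivered] unfolding D_def M_def by blast
    moreover have "finite M"
      unfolding M_def by (rule finite_sched_config_msgs_tag_le)
    ultimately have "finite (?recv ` D)"
      using finite_subset by blast
    moreover have "inj_on ?recv D"
    proof (rule inj_onI)
      fix x y assume "x \<in> D" "y \<in> D" "?recv x = ?recv y"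
      moreover from \<open>x \<in> D\<close> obtain r where "?recv x = Some r"
        using recv_D by blast
      ultimately show "x = y"
        using sched_event_delivers_once by metis
    qed
    ultimately show False
      using \<open>infinite D\<close> finite_imageD by blast
  qed
qed

lemma sched_is_run:
  assumes "\<forall>k. sch k \<le> n"
  shows "is_run P n v a (sched_event P v a sch) (sched_config P v a sch)"
  using assms sched_event_delivers sched_config_Suc unfolding is_run_def by auto

end

lemma sched_config_agree_except:
  assumes "\<forall>i. i \<noteq> q \<longrightarrow> a i = a' i" "\<forall>k<K. sch k = sch' k \<and> sch k \<noteq> q" "k \<le> K"
  shows "agree_except q (sched_config P v a sch k) (sched_config P v a' sch' k)"
  using assms(3)
proof (induction k)
  case 0
  then show ?case
    using assms(1) unfolding agree_except_def by simp
next
  case (Suc k)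
  have IH: "agree_except q (sched_config P v a sch k) (sched_config P v a' sch' k)"
    using Suc by simp
  have "k < K"
    using Suc.prems by simp
  then have sch: "sch k = sch' k" "sch k \<noteq> q"
    using assms(2) by blast+
  have "sched_event P v a sch k = sched_event P v a' sch' k"
    using IH sch unfolding sched_event_def agree_except_def by simp
  moreover have "agree_except q
      (step_config P k (sched_event P v a sch k) (sched_config P v a sch k))
      (step_config P k (sched_event P v a sch k) (sched_config P v a' sch' k))"
    using sch by (intro step_config_agree_except[OF IH]) simp
  ultimately show ?case
    by (simp add: sched_config_Suc)
qed

lemma infinite_eventually_round_robin:
  fixes f :: "nat \<Rightarrow> nat"
  assumes "\<forall>k\<ge>K. f k = k mod m" "p < m"
  shows "infinite {k. f k = p}"
  unfolding infinite_nat_iff_unbounded_le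
proof
  fix b :: nat
  define k where "k = p + m * (K + b)"
  have "K + b \<le> m * (K + b)"
    using assms(2) by simp
  then have "K \<le> k" "b \<le> k"
    unfolding k_def by linarith+
  moreover have "k mod m = p"
    using assms(2) unfolding k_def by simp
  ultimately show "\<exists>k\<ge>b. k \<in> {k. f k = p}"
    using assms(1) by auto
qed

lemma t_resilient_solves_sched_run:
  assumes "t_resilient_solves n t v P" "\<forall>k. sch k \<le> n"
    and "card (faulty n (sched_event P v a sch)) \<le> t"
  shows "(\<forall>p. p \<le> n \<and> p \<notin> faulty n (sched_event P v a sch)
            \<longrightarrow> (\<exists>d\<in>{0, 1}. decides P (sched_config P v a sch) p d))
     \<and> decided_values P n (sched_event P v a sch) (sched_config P v a sch)
         \<in> Xi (input_simplex n v a (sched_event P v a sch))"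
  using assms sched_is_run sched_fair unfolding t_resilient_solves_def by blast

lemma all_commit_run_decides_commit:
  assumes "t_resilient_solves n t v P" "1 \<le> t" "1 \<le> n"
  shows "decides P (sched_config P v (\<lambda>_. One) (\<lambda>k. k mod n)) 0 1"
proof -
  let ?E = "sched_event P v (\<lambda>_. One) (\<lambda>k. k mod n)"
  let ?C = "sched_config P v (\<lambda>_. One) (\<lambda>k. k mod n)"
  have "infinite {k. fst (?E k) = p}" if "p < n" for p
    using infinite_eventually_round_robin[of 0 "\<lambda>k. k mod n" n p] that by simp
  then have "faulty n ?E \<subseteq> {n}"
    unfolding faulty_def using le_neq_implies_less by blast
  then have "card (faulty n ?E) \<le> card {n}"
    by (intro card_mono) simp_all
  then have spec: "(\<forall>p. p \<le> n \<and> p \<notin> faulty n ?E \<longrightarrow> (\<exists>d\<in>{0, 1}. decides P ?C p d))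
      \<and> decided_values P n ?E ?C \<in> Xi (input_simplex n v (\<lambda>_. One) ?E)"
    using t_resilient_solves_sched_run[OF assms(1)] assms(2,3) by simp
  moreover have "0 \<notin> faulty n ?E"
    using \<open>faulty n ?E \<subseteq> {n}\<close> assms(3) by auto
  ultimately obtain d where d: "decides P ?C 0 d"
    by auto
  have "0 \<in> participating n ?E"
    unfolding participating_def by (auto intro!: exI[of _ 0])
  then have "d \<in> decided_values P n ?E ?C"
    using d unfolding decided_values_def by blast
  moreover have "Xi (input_simplex n v (\<lambda>_. One) ?E) = {{1}}"
    unfolding Xi_def input_simplex_def by auto
  ultimately show ?thesis
    using spec d by auto
qed

lemma fork_run_decides_abort:
  assumes "t_resilient_solves n t v P" "\<forall>k\<ge>K. sch k = k mod (n + 1)" "\<forall>k. sch k \<le> n"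
    and "a n = Bot"
  shows "decided_values P n (sched_event P v a sch) (sched_config P v a sch) = {0}"
proof -
  let ?E = "sched_event P v a sch"
  have inf: "infinite {k. fst (?E k) = p}" if "p \<le> n" for p
    using infinite_eventually_round_robin[OF assms(2)] that by simp
  then have "faulty n ?E = {}"
    unfolding faulty_def by blast
  then have "decided_values P n ?E (sched_config P v a sch) \<in> Xi (input_simplex n v a ?E)"
    using t_resilient_solves_sched_run[OF assms(1,3)] by simp
  moreover have "n \<in> participating n ?E"
    using not_finite_existsD[OF inf[of n]] unfolding participating_def by auto
  then have "(v n, Bot) \<in> input_simplex n v a ?E"
    using assms(4) unfolding input_simplex_def by force
  then have "Xi (input_simplex n v a ?E) = {{0}}"
    unfolding Xi_def by force
  ultimately show ?thesis
    by simp
qed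

theorem lemma2:
  fixes n t :: nat and v :: "nat \<Rightarrow> 'b" and P :: "('b, 's, 'm) protocol"
  assumes "n \<ge> 1" and "1 \<le> t" and "2 * t < n + 1" and "inj_on v {0..n}"
  shows "\<not> t_resilient_solves n t v P"
proof
  assume sol: "t_resilient_solves n t v P"
  let ?C1 = "sched_config P v (\<lambda>_. One) (\<lambda>k. k mod n)"
  obtain K where K: "out P 0 (fst (?C1 K) 0) = Some 1" "\<forall>k<K. out P 0 (fst (?C1 k) 0) = None"
    using all_commit_run_decides_commit[OF sol assms(2,1)] unfolding decides_def by blast
  define a where "a i = (if i = n then Bot else One)" for i
  define sch where "sch k = (if k < K then k mod n else k mod (n + 1))" for k
  let ?C2 = "sched_config P v a sch"
  have "k mod n < n" for k
    using assms(1) by simp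
  then have sch_prefix: "\<forall>k<K. k mod n = sch k \<and> k mod n \<noteq> n"
    unfolding sch_def by (metis less_irrefl)
  have "agree_except n (?C1 k) (?C2 k)" if "k \<le> K" for k
    by (rule sched_config_agree_except[OF _ sch_prefix that]) (simp add: a_def)
  then have "decides P ?C2 0 1"
    using K assms(1) unfolding decides_def agree_except_def
    by (intro exI[of _ K]) (auto simp: less_imp_le_nat)
  moreover have "0 \<in> participating n (sched_event P v a sch)"
    unfolding participating_def sch_def by (auto intro!: exI[of _ 0])
  moreover have "decided_values P n (sched_event P v a sch) ?C2 = {0}"
  proof (rule fork_run_decides_abort[OF sol])
    show "\<forall>k\<ge>K. sch k = k mod (n + 1)" "\<forall>k. sch k \<le> n" "a n = Bot"
      using assms(1) unfolding sch_def a_def by (simp_all add: less_Suc_eq_le)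
  qed
  ultimately show False
    unfolding decided_values_def by auto
qed

end
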